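(* Let $q$ be an even prime power which is a square, and assume that the affine space $AG(3,q)$ contains a translation cap of size $q^{3/2}$. Then for every integer $N>2$ there exists a subset $K$ of the affine space $AG(N,q)$ with $|K|\le q^{N/2}$ such that every point of $AG(N,q)\setminus K$ lies on at least $(q-2)/2$ distinct secants of $K$.
   Context: $AG(N,q)$ denotes the $N$-dimensional affine space over $\mathbb{F}_q$, identified with $\mathbb{F}_q^N$. A cap is a set of points no three of which are collinear. A translation cap in $AG(N,q)$ is a cap $K$ on which some group of translations of $AG(N,q)$ acts regularly (equivalently, $K$ is a coset $x+T$ of an additive subgroup $T$ of $\mathbb{F}_q^N$). A secant of a point set $K$ is a line meeting $K$ in at least two points. *)

theory Defs
  imports Complex_Main
begin

text \<open>The affine space AG(N,q) over a finite field 'a (q = CARD('a)) is modelled as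
  F_q^N, i.e. functions nat => 'a vanishing outside {0..<N}.\<close>

definition aspace :: "nat \<Rightarrow> (nat \<Rightarrow> 'a::field) set" where
  "aspace N = {x. \<forall>i\<ge>N. x i = 0}"

definition aline :: "(nat \<Rightarrow> 'a::field) \<Rightarrow> (nat \<Rightarrow> 'a) \<Rightarrow> (nat \<Rightarrow> 'a) set" where
  "aline a d = {(\<lambda>i. a i + t * d i) | t. True}"

definition is_line :: "nat \<Rightarrow> (nat \<Rightarrow> 'a::field) set \<Rightarrow> bool" where
  "is_line N L \<longleftrightarrow> (\<exists>a d. a \<in> aspace N \<and> d \<in> aspace N \<and> (\<exists>i. d i \<noteq> 0) \<and> L = aline a d)"

definition is_cap :: "nat \<Rightarrow> (nat \<Rightarrow> 'a::field) set \<Rightarrow> bool" where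
  "is_cap N K \<longleftrightarrow> K \<subseteq> aspace N \<and>
     (\<forall>x\<in>K. \<forall>y\<in>K. \<forall>z\<in>K. x \<noteq> y \<and> y \<noteq> z \<and> x \<noteq> z \<longrightarrow>
        \<not> (\<exists>L. is_line N L \<and> x \<in> L \<and> y \<in> L \<and> z \<in> L))"

definition additive_subgroup :: "nat \<Rightarrow> (nat \<Rightarrow> 'a::field) set \<Rightarrow> bool" where
  "additive_subgroup N T \<longleftrightarrow> T \<subseteq> aspace N \<and> (\<lambda>i. 0) \<in> T \<and>
     (\<forall>x\<in>T. \<forall>y\<in>T. (\<lambda>i. x i + y i) \<in> T) \<and> (\<forall>x\<in>T. (\<lambda>i. - x i) \<in> T)"

definition is_translation_cap :: "nat \<Rightarrow> (nat \<Rightarrow> 'a::field) set \<Rightarrow> bool" where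
  "is_translation_cap N K \<longleftrightarrow> is_cap N K \<and>
     (\<exists>x T. x \<in> aspace N \<and> additive_subgroup N T \<and> K = (\<lambda>t i. x i + t i) ` T)"

definition is_secant :: "nat \<Rightarrow> (nat \<Rightarrow> 'a::field) set \<Rightarrow> (nat \<Rightarrow> 'a) set \<Rightarrow> bool" where
  "is_secant N K L \<longleftrightarrow> is_line N L \<and> (\<exists>x\<in>L \<inter> K. \<exists>y\<in>L \<inter> K. x \<noteq> y)"

end

theory Submission
  imports Defs "HOL-Library.Cardinality" "HOL-Library.Z2" "HOL-Library.Disjoint_Sets"
begin

text \<open>Call an additive subgroup \<open>T \<subseteq> \<bbbF>\<^sub>q\<^sup>N\<close> scale-free if it meets every line through \<open>0\<close>
  in at most two points; for subgroups this is exactly the cap property. If moreover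
  \<open>|T|\<^sup>2 = q\<^sup>N\<close>, then for each \<open>s \<notin> {0, 1}\<close> the map \<open>(a, d) \<mapsto> a + s d\<close> is injective on
  \<open>T \<times> T\<close>, hence onto \<open>\<bbbF>\<^sub>q\<^sup>N\<close>. A point \<open>p \<notin> T\<close> thus has \<open>q - 2\<close> representations
  \<open>p = a + s d\<close>, each lying on the secant through \<open>a, a + d \<in> T\<close>, and a secant arises from at
  most the two parameters \<open>s\<close> and \<open>1 - s\<close>: so \<open>p\<close> lies on at least \<open>(q - 2)/2\<close> secants.

  For \<open>q = m\<^sup>2\<close> even, scale-free subgroups of size \<open>m\<^sup>N\<close> exist for all \<open>N \<noteq> 1\<close>: start from
  \<open>{0}\<close> in dimension 0 or from the translation cap in dimension 3, and repeatedly pass from \<open>T\<close>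
  to \<open>{(y, t, t\<^sup>2) | y \<in> T, t \<in> \<bbbF>\<^sub>q}\<close>. In characteristic 2 squaring is additive, so this is again a
  subgroup, and \<open>s t\<^sup>2 = (s t)\<^sup>2\<close> forces \<open>t = 0\<close> for \<open>s \<notin> {0, 1}\<close>, so it stays scale-free.\<close>

lemma one_plus_one_eq_zero_if_even_card:
  assumes "even CARD('a)"
  shows "(1::'a::{field,finite}) + 1 = 0"
proof (rule ccontr)
  assume two_ne_0: "(1::'a) + 1 \<noteq> 0"
  have "- x \<noteq> x" if "x \<noteq> 0" for x :: 'a
  proof
    assume "- x = x"
    then have "(1 + 1) * x = 0" by (simp add: algebra_simps)
    with two_ne_0 that show False by simp
  qed
  then have "(\<Sum>x\<in>UNIV - {0::'a}. (1::bit)) = 0"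
    by (intro sum_involution_eq_0[where h = uminus]) auto
  then have "even (of_nat (card (UNIV - {0::'a})) :: bit)"
    by simp
  then have "even (card (UNIV - {0::'a}))"
    by (simp only: even_of_nat)
  then show False
    using assms by (simp add: card_Diff_singleton)
qed

lemma char2_add_self: "(1::'a::field) + 1 = 0 \<Longrightarrow> x + x = (0::'a)"
  by (metis distrib_right mult_1 mult_zero_left)

lemma char2_uminus: "(1::'a::field) + 1 = 0 \<Longrightarrow> - x = (x::'a)"
  by (metis add_eq_0_iff char2_add_self)

lemma char2_power2_add: "(1::'a::field) + 1 = 0 \<Longrightarrow> (x + y) ^ 2 = x ^ 2 + (y::'a) ^ 2"
  by (simp add: power2_sum char2_add_self mult_2 flip: mult.assoc)

lemma aspace_Suc:
  "aspace (Suc n) = (\<lambda>(y, t). y(n := t)) ` (aspace n \<times> (UNIV :: 'a::field set))"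
proof (rule set_eqI, rule iffI)
  fix x :: "nat \<Rightarrow> 'a"
  assume x: "x \<in> aspace (Suc n)"
  then have "x(n := 0) \<in> aspace n"
    by (auto simp: aspace_def)
  moreover have "x = (\<lambda>(y, t). y(n := t)) (x(n := 0), x n)"
    by simp
  ultimately show "x \<in> (\<lambda>(y, t). y(n := t)) ` (aspace n \<times> UNIV)"
    by blast
qed (auto simp: aspace_def)

lemma aspace_0: "aspace 0 = {\<lambda>i. 0}"
  by (auto simp: aspace_def)

lemma finite_aspace: "finite (aspace n :: (nat \<Rightarrow> 'a::{field,finite}) set)"
  by (induction n) (simp_all add: aspace_0 aspace_Suc)

lemma card_aspace: "card (aspace n :: (nat \<Rightarrow> 'a::{field,finite}) set) = CARD('a) ^ n"
proof (induction n)
  case 0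
  show ?case
    by (simp add: aspace_0)
next
  case (Suc n)
  have "inj_on (\<lambda>(y, t). y(n := t)) (aspace n \<times> (UNIV :: 'a set))"
  proof (rule inj_onI, clarsimp)
    fix y y' :: "nat \<Rightarrow> 'a" and t t'
    assume y: "y \<in> aspace n" "y' \<in> aspace n" and eq: "y(n := t) = y'(n := t')"
    from y have "y = (y(n := t))(n := 0)" "y' = (y'(n := t'))(n := 0)"
      by (auto simp: aspace_def)
    with eq show "y = y' \<and> t = t'"
      by (metis fun_upd_same)
  qed
  with Suc show ?case
    by (simp add: aspace_Suc card_image card_cartesian_product)
qed

lemma aline_subset_aspace: "a \<in> aspace N \<Longrightarrow> d \<in> aspace N \<Longrightarrow> aline a d \<subseteq> aspace N"
  by (auto simp: aline_def aspace_def)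

lemma aline_memI: "(\<lambda>i. a i + t * d i) \<in> aline a d"
  unfolding aline_def by blast

lemma aline_base: "a \<in> aline a d"
  using aline_memI[of a 0 d] by simp

lemma aline_base_plus_direction: "(\<lambda>i. a i + d i) \<in> aline a d"
  using aline_memI[of a 1 d] by simp

lemma additive_subgroup_zero: "additive_subgroup N T \<Longrightarrow> (\<lambda>i. 0) \<in> T"
  by (simp add: additive_subgroup_def)

lemma additive_subgroup_add:
  "additive_subgroup N T \<Longrightarrow> x \<in> T \<Longrightarrow> y \<in> T \<Longrightarrow> (\<lambda>i. x i + y i) \<in> T"
  by (simp add: additive_subgroup_def)

lemma additive_subgroup_diff:
  assumes "additive_subgroup N T" "x \<in> T" "y \<in> T"
  shows "(\<lambda>i. x i - y i) \<in> T"
  using additive_subgroup_add[OF assms(1,2), of "\<lambda>i. - y i"] assms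
  by (simp add: additive_subgroup_def)

definition scale_free :: "(nat \<Rightarrow> 'a::field) set \<Rightarrow> bool" where
  "scale_free T \<longleftrightarrow>
     (\<forall>s x. s \<noteq> 0 \<and> s \<noteq> 1 \<and> x \<in> T \<and> (\<lambda>i. s * x i) \<in> T \<longrightarrow> x = (\<lambda>i. 0))"

lemma scale_freeD:
  "scale_free T \<Longrightarrow> s \<noteq> 0 \<Longrightarrow> s \<noteq> 1 \<Longrightarrow> x \<in> T \<Longrightarrow> (\<lambda>i. s * x i) \<in> T \<Longrightarrow> x = (\<lambda>i. 0)"
  by (auto simp: scale_free_def)

lemma translation_cap_scale_free:
  fixes C :: "(nat \<Rightarrow> 'a::field) set"
  assumes "is_translation_cap N C"
  obtains T :: "(nat \<Rightarrow> 'a) set" where "additive_subgroup N T" "scale_free T" "card T = card C"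
proof -
  obtain x0 T where x0: "x0 \<in> aspace N" and T: "additive_subgroup N T"
    and C: "C = (\<lambda>t i. x0 i + t i) ` T"
    using assms by (auto simp: is_translation_cap_def)
  have "scale_free T"
    unfolding scale_free_def
  proof (intro allI impI, elim conjE, rule ccontr)
    fix s :: 'a and y
    assume s: "s \<noteq> 0" "s \<noteq> 1" and y: "y \<in> T" "(\<lambda>i. s * y i) \<in> T" and "y \<noteq> (\<lambda>i. 0)"
    then obtain j where j: "y j \<noteq> 0"
      by auto
    have line: "is_line N (aline x0 y)"
      using x0 y T j by (auto simp: is_line_def additive_subgroup_def)
    have "x0 \<in> C" "(\<lambda>i. x0 i + y i) \<in> C" "(\<lambda>i. x0 i + s * y i) \<in> C"
      using additive_subgroup_zero[OF T] y unfolding C by force+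
    moreover have "x0 \<in> aline x0 y" "(\<lambda>i. x0 i + y i) \<in> aline x0 y"
      "(\<lambda>i. x0 i + s * y i) \<in> aline x0 y"
      by (rule aline_base aline_base_plus_direction aline_memI)+
    moreover have "x0 \<noteq> (\<lambda>i. x0 i + y i)" "x0 \<noteq> (\<lambda>i. x0 i + s * y i)"
      "(\<lambda>i. x0 i + y i) \<noteq> (\<lambda>i. x0 i + s * y i)"
      using j s by (auto dest!: fun_cong[of _ _ j])
    moreover have "is_cap N C"
      using assms by (simp add: is_translation_cap_def)
    ultimately show False
      using line unfolding is_cap_def by blast
  qed
  moreover have "card T = card C"
    unfolding C by (rule card_image[symmetric]) (simp add: inj_on_def fun_eq_iff)
  ultimately show thesis
    using T that by blast
qed

lemma scale_free_aline_inter: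
  assumes T: "additive_subgroup N T" "scale_free T"
    and a: "a \<in> T" "(\<lambda>i. a i + d i) \<in> T"
  shows "aline a d \<inter> T \<subseteq> {a, \<lambda>i. a i + d i}"
proof
  fix x assume "x \<in> aline a d \<inter> T"
  then obtain t where x: "x = (\<lambda>i. a i + t * d i)" "x \<in> T"
    by (auto simp: aline_def)
  have "(\<lambda>i. (a i + d i) - a i) \<in> T"
    using additive_subgroup_diff[OF T(1) a(2,1)] .
  then have d: "d \<in> T"
    by simp
  have "(\<lambda>i. x i - a i) \<in> T"
    using additive_subgroup_diff[OF T(1) x(2) a(1)] .
  then have "(\<lambda>i. t * d i) \<in> T"
    by (simp add: x)
  then have "t = 0 \<or> t = 1 \<or> d = (\<lambda>i. 0)"
    using scale_freeD[OF T(2) _ _ d] by blast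
  then show "x \<in> {a, \<lambda>i. a i + d i}"
    by (auto simp: x)
qed

lemma scale_free_decomposition:
  fixes T :: "(nat \<Rightarrow> 'a::{field,finite}) set"
  assumes T: "additive_subgroup N T" "scale_free T" and card_T: "card T * card T = CARD('a) ^ N"
    and s: "s \<noteq> 0" "s \<noteq> 1" and p: "p \<in> aspace N"
  obtains a d where "a \<in> T" "d \<in> T" "p = (\<lambda>i. a i + s * d i)"
proof -
  define \<phi> where "\<phi> = (\<lambda>(a, d :: nat \<Rightarrow> 'a) i. a i + s * d i)"
  have "inj_on \<phi> (T \<times> T)"
  proof (rule inj_onI, clarify)
    fix a d a' d' assume in_T: "a \<in> T" "d \<in> T" "a' \<in> T" "d' \<in> T" and eq: "\<phi> (a, d) = \<phi> (a', d')"
    have eq_at: "a i + s * d i = a' i + s * d' i" for i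
      using fun_cong[OF eq, of i] by (simp add: \<phi>_def)
    have "(\<lambda>i. s * (d' i - d i)) = (\<lambda>i. a i - a' i)"
    proof
      fix i show "s * (d' i - d i) = a i - a' i"
        using eq_at[of i] by (simp add: algebra_simps)
    qed
    then have "(\<lambda>i. s * (d' i - d i)) \<in> T"
      using additive_subgroup_diff[OF T(1) in_T(1,3)] by simp
    then have "(\<lambda>i. d' i - d i) = (\<lambda>i. 0)"
      using scale_freeD[OF T(2) s] additive_subgroup_diff[OF T(1) in_T(4,2)] by blast
    then have "d = d'"
      by (simp add: fun_eq_iff)
    with eq_at show "a = a' \<and> d = d'"
      by (simp add: fun_eq_iff)
  qed
  then have "card (\<phi> ` (T \<times> T)) = card (aspace N :: (nat \<Rightarrow> 'a) set)"
    by (simp add: card_image card_cartesian_product card_T card_aspace)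
  moreover have "\<phi> ` (T \<times> T) \<subseteq> aspace N"
  proof clarify
    fix a d assume "a \<in> T" "d \<in> T"
    then have "a \<in> aspace N" "d \<in> aspace N"
      using T(1) by (auto simp: additive_subgroup_def)
    then show "\<phi> (a, d) \<in> aspace N"
      by (simp add: \<phi>_def aspace_def)
  qed
  ultimately have "\<phi> ` (T \<times> T) = aspace N"
    by (simp add: card_subset_eq finite_aspace)
  with p obtain a d where "a \<in> T" "d \<in> T" "p = \<phi> (a, d)"
    by blast
  then show thesis
    by (intro that) (simp_all add: \<phi>_def)
qed

lemma scale_free_decomposition_line_eq:
  assumes T: "additive_subgroup N T" "scale_free T"
    and in_T: "a \<in> T" "d \<in> T" "b \<in> T" "f \<in> T"
    and nonzero: "d \<noteq> (\<lambda>i. 0)" "f \<noteq> (\<lambda>i. 0)"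
    and p: "(\<lambda>i. a i + s * d i) = (\<lambda>i. b i + t * f i)"
    and lines: "aline b f = aline a d"
  shows "t = s \<or> t = 1 - s"
proof -
  obtain j where j: "d j \<noteq> 0"
    using nonzero(1) by auto
  have ends: "aline a d \<inter> T \<subseteq> {a, \<lambda>i. a i + d i}"
    using scale_free_aline_inter[OF T in_T(1)] additive_subgroup_add[OF T(1) in_T(1,2)] by blast
  have "b \<in> {a, \<lambda>i. a i + d i}" "(\<lambda>i. b i + f i) \<in> {a, \<lambda>i. a i + d i}"
    using ends aline_base[of b f] aline_base_plus_direction[of b f] lines
      in_T(3) additive_subgroup_add[OF T(1) in_T(3,4)] by blast+
  moreover have "b \<noteq> (\<lambda>i. b i + f i)"
    using nonzero(2) by (auto simp: fun_eq_iff)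
  ultimately consider "b = a" "(\<lambda>i. b i + f i) = (\<lambda>i. a i + d i)"
    | "b = (\<lambda>i. a i + d i)" "(\<lambda>i. b i + f i) = a"
    by (metis insertE singletonD)
  then show ?thesis
  proof cases
    case 1
    then have "f j = d j"
      using fun_cong[OF 1(2), of j] by simp
    with 1 have "(s - t) * d j = 0"
      using fun_cong[OF p, of j] by (simp add: algebra_simps)
    then show ?thesis
      using j by simp
  next
    case 2
    then have "f j = - d j"
      using fun_cong[OF 2(2), of j] by (simp add: eq_neg_iff_add_eq_0 algebra_simps)
    with 2 have "(s - (1 - t)) * d j = 0"
      using fun_cong[OF p, of j] by (simp add: algebra_simps)
    then show ?thesis
      using j by auto
  qed
qed

lemma card_le_mult_card_image:
  assumes "finite A" and fibres: "\<And>x. x \<in> A \<Longrightarrow> card {y \<in> A. f y = f x} \<le> k"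
  shows "card A \<le> k * card (f ` A)"
proof -
  have "A = (\<Union>b\<in>f ` A. {y \<in> A. f y = b})"
    by auto
  then have "card A \<le> (\<Sum>b\<in>f ` A. card {y \<in> A. f y = b})"
    by (metis assms(1) card_UN_le finite_imageI)
  also have "\<dots> \<le> (\<Sum>b\<in>f ` A. k)"
    using fibres by (intro sum_mono) auto
  finally show ?thesis
    by (simp add: mult.commute)
qed

lemma finite_secants:
  "finite {L. is_secant N (K :: (nat \<Rightarrow> 'a::{field,finite}) set) L \<and> p \<in> L}"
proof (rule finite_subset)
  show "{L. is_secant N K L \<and> p \<in> L} \<subseteq> Pow (aspace N)"
    using aline_subset_aspace by (auto simp: is_secant_def is_line_def)
qed (simp add: finite_aspace)

lemma additive_subgroup_secant:
  assumes T: "additive_subgroup N T" and in_T: "a \<in> T" "d \<in> T" and d: "d \<noteq> (\<lambda>i. 0)"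
  shows "is_secant N T (aline a d)"
proof -
  obtain j where "d j \<noteq> 0"
    using d by auto
  then have "is_line N (aline a d)"
    using in_T T by (auto simp: is_line_def additive_subgroup_def)
  moreover have "a \<in> aline a d \<inter> T" "(\<lambda>i. a i + d i) \<in> aline a d \<inter> T"
    using in_T additive_subgroup_add[OF T in_T] by (simp_all add: aline_base aline_base_plus_direction)
  moreover have "a \<noteq> (\<lambda>i. a i + d i)"
    using d by (auto simp: fun_eq_iff)
  ultimately show ?thesis
    unfolding is_secant_def by blast
qed

lemma card_secants_through_point:
  fixes T :: "(nat \<Rightarrow> 'a::{field,finite}) set"
  assumes T: "additive_subgroup N T" "scale_free T" and card_T: "card T * card T = CARD('a) ^ N"
    and p: "p \<in> aspace N" "p \<notin> T"
  shows "(real CARD('a) - 2) / 2 \<le> real (card {L. is_secant N T L \<and> p \<in> L})"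
proof -
  define S where "S = UNIV - {0, 1 :: 'a}"
  have "\<forall>s\<in>S. \<exists>a d. a \<in> T \<and> d \<in> T \<and> p = (\<lambda>i. a i + s * d i)"
    using scale_free_decomposition[OF T card_T _ _ p(1)] by (auto simp: S_def)
  then obtain a d where ad: "\<And>s. s \<in> S \<Longrightarrow> a s \<in> T \<and> d s \<in> T \<and> p = (\<lambda>i. a s i + s * d s i)"
    by metis
  define line where "line s = aline (a s) (d s)" for s
  have d_nonzero: "d s \<noteq> (\<lambda>i. 0)" if "s \<in> S" for s
    using ad[OF that] p(2) by auto
  have secant: "is_secant N T (line s) \<and> p \<in> line s" if s: "s \<in> S" for s
    using additive_subgroup_secant[OF T(1) _ _ d_nonzero[OF s]] ad[OF s] aline_memI
    by (simp add: line_def)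
  have "card {t \<in> S. line t = line s} \<le> 2" if s: "s \<in> S" for s
  proof -
    have "{t \<in> S. line t = line s} \<subseteq> {s, 1 - s}"
    proof
      fix t assume "t \<in> {t \<in> S. line t = line s}"
      then have t: "t \<in> S" "line t = line s"
        by simp_all
      then have "t = s \<or> t = 1 - s"
        by (intro scale_free_decomposition_line_eq[OF T, of "a s" "d s" "a t" "d t"])
          (use ad[OF s] ad[OF t(1)] d_nonzero s in \<open>simp_all add: line_def\<close>)
      then show "t \<in> {s, 1 - s}"
        by simp
    qed
    then have "card {t \<in> S. line t = line s} \<le> card {s, 1 - s}"
      by (intro card_mono) simp_all
    also have "\<dots> \<le> 2"
      by (simp add: card_insert_if)
    finally show ?thesis .
  qed
  then have "card S \<le> 2 * card (line ` S)"
    by (intro card_le_mult_card_image) simp_all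
  also have "card (line ` S) \<le> card {L. is_secant N T L \<and> p \<in> L}"
    using secant by (intro card_mono finite_secants) auto
  finally have "card S \<le> 2 * card {L. is_secant N T L \<and> p \<in> L}"
    by simp
  moreover have "card {0, 1 :: 'a} \<le> CARD('a)"
    by (rule card_mono) simp_all
  ultimately show ?thesis
    by (simp add: S_def card_Diff_subset of_nat_diff)
qed

definition parabolic_lift :: "nat \<Rightarrow> (nat \<Rightarrow> 'a::field) set \<Rightarrow> (nat \<Rightarrow> 'a) set" where
  "parabolic_lift n T = (\<lambda>(y, t). y(n := t, Suc n := t ^ 2)) ` (T \<times> UNIV)"

lemma parabolic_lift_memI: "y \<in> T \<Longrightarrow> y(n := t, Suc n := t ^ 2) \<in> parabolic_lift n T"
  unfolding parabolic_lift_def by (rule image_eqI[of _ _ "(y, t)"]) simp_all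

lemma parabolic_lift_memE:
  assumes "x \<in> parabolic_lift n T"
  obtains y t where "y \<in> T" "x = y(n := t, Suc n := t ^ 2)"
  using assms by (auto simp: parabolic_lift_def)

lemma parabolic_lift_additive_subgroup:
  fixes T :: "(nat \<Rightarrow> 'a::field) set"
  assumes char2: "(1::'a) + 1 = 0" and T: "additive_subgroup n T"
  shows "additive_subgroup (n + 2) (parabolic_lift n T)"
proof -
  have "parabolic_lift n T \<subseteq> aspace (n + 2)"
    using T by (auto simp: additive_subgroup_def aspace_def elim!: parabolic_lift_memE)
  moreover have "(\<lambda>i. 0) \<in> parabolic_lift n T"
  proof -
    have "(\<lambda>i. 0 :: 'a) = (\<lambda>i. 0)(n := 0, Suc n := 0 ^ 2)"
      by auto
    then show ?thesis
      using parabolic_lift_memI[OF additive_subgroup_zero[OF T]] by metis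
  qed
  moreover have "(\<lambda>i. x i + y i) \<in> parabolic_lift n T"
    if in_lift: "x \<in> parabolic_lift n T" "y \<in> parabolic_lift n T" for x y
  proof -
    obtain u s where u: "u \<in> T" "x = u(n := s, Suc n := s ^ 2)"
      using in_lift(1) by (rule parabolic_lift_memE)
    obtain v t where v: "v \<in> T" "y = v(n := t, Suc n := t ^ 2)"
      using in_lift(2) by (rule parabolic_lift_memE)
    have "(\<lambda>i. x i + y i) = (\<lambda>i. u i + v i)(n := s + t, Suc n := (s + t) ^ 2)"
      using char2_power2_add[OF char2] by (auto simp: u(2) v(2))
    then show ?thesis
      using parabolic_lift_memI[OF additive_subgroup_add[OF T u(1) v(1)]] by simp
  qed
  moreover have "(\<lambda>i. - x i) = x" for x :: "nat \<Rightarrow> 'a"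
    by (simp add: char2_uminus[OF char2])
  ultimately show ?thesis
    by (simp add: additive_subgroup_def)
qed

lemma parabolic_lift_scale_free:
  fixes T :: "(nat \<Rightarrow> 'a::field) set"
  assumes T: "T \<subseteq> aspace n" "scale_free T"
  shows "scale_free (parabolic_lift n T)"
  unfolding scale_free_def
proof (intro allI impI, elim conjE)
  fix s :: 'a and x
  assume s: "s \<noteq> 0" "s \<noteq> 1" and x: "x \<in> parabolic_lift n T"
    and sx: "(\<lambda>i. s * x i) \<in> parabolic_lift n T"
  obtain y t where y: "y \<in> T" "x = y(n := t, Suc n := t ^ 2)"
    using x by (elim parabolic_lift_memE)
  obtain z u where z: "z \<in> T" "(\<lambda>i. s * x i) = z(n := u, Suc n := u ^ 2)"
    using sx by (elim parabolic_lift_memE)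
  have "(\<lambda>i. s * y i) = z"
  proof
    fix i show "s * y i = z i"
    proof (cases "i < n")
      case True
      then show ?thesis
        using fun_cong[OF z(2), of i] by (simp add: y(2))
    next
      case False
      then have "y i = 0" "z i = 0"
        using y(1) z(1) T(1) by (auto simp: aspace_def)
      then show ?thesis
        by simp
    qed
  qed
  then have y_0: "y = (\<lambda>i. 0)"
    using scale_freeD[OF T(2) s y(1)] z(1) by simp
  have "s * t = u" "s * t ^ 2 = u ^ 2"
    using fun_cong[OF z(2), of n] fun_cong[OF z(2), of "Suc n"] by (simp_all add: y(2))
  then have "s * (s - 1) * t ^ 2 = 0"
    by (simp add: algebra_simps power2_eq_square)
  then have "t = 0"
    using s by simp
  with y_0 show "x = (\<lambda>i. 0)"
    by (simp add: y(2) fun_eq_iff)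
qed

lemma card_parabolic_lift:
  fixes T :: "(nat \<Rightarrow> 'a::{field,finite}) set"
  assumes T: "T \<subseteq> aspace n"
  shows "card (parabolic_lift n T) = card T * CARD('a)"
proof -
  have "inj_on (\<lambda>(y, t). y(n := t, Suc n := t ^ 2)) (T \<times> (UNIV :: 'a set))"
  proof (rule inj_onI, clarsimp)
    fix y y' :: "nat \<Rightarrow> 'a" and t t'
    assume y: "y \<in> T" "y' \<in> T" and eq: "y(n := t, Suc n := t ^ 2) = y'(n := t', Suc n := t' ^ 2)"
    from y T have "y = (y(n := t, Suc n := t ^ 2))(n := 0, Suc n := 0)"
      "y' = (y'(n := t', Suc n := t' ^ 2))(n := 0, Suc n := 0)"
      by (auto simp: aspace_def subset_iff)
    with eq show "y = y' \<and> t = t'"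
      by (metis fun_upd_same fun_upd_other n_not_Suc_n)
  qed
  then show ?thesis
    by (simp add: parabolic_lift_def card_image card_cartesian_product)
qed

lemma exists_scale_free_subgroup_add_even:
  fixes T :: "(nat \<Rightarrow> 'a::{field,finite}) set"
  assumes char2: "(1::'a) + 1 = 0" and q: "CARD('a) = m ^ 2"
    and T: "additive_subgroup n T" "scale_free T" "card T = m ^ n"
  shows "\<exists>T' :: (nat \<Rightarrow> 'a) set.
    additive_subgroup (n + 2 * k) T' \<and> scale_free T' \<and> card T' = m ^ (n + 2 * k)"
proof (induction k)
  case 0
  show ?case
    using T by auto
next
  case (Suc k)
  then obtain T' :: "(nat \<Rightarrow> 'a) set" where T': "additive_subgroup (n + 2 * k) T'"
    "scale_free T'" "card T' = m ^ (n + 2 * k)"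
    by blast
  have sub: "T' \<subseteq> aspace (n + 2 * k)"
    using T'(1) by (simp add: additive_subgroup_def)
  have "additive_subgroup (n + 2 * k + 2) (parabolic_lift (n + 2 * k) T')"
    using parabolic_lift_additive_subgroup[OF char2 T'(1)] .
  moreover have "scale_free (parabolic_lift (n + 2 * k) T')"
    using parabolic_lift_scale_free[OF sub T'(2)] .
  moreover have "card (parabolic_lift (n + 2 * k) T') = m ^ (n + 2 * k + 2)"
    unfolding card_parabolic_lift[OF sub] T'(3) q by (rule power_add[symmetric])
  moreover have "n + 2 * Suc k = n + 2 * k + 2"
    by simp
  ultimately show ?case
    by metis
qed

lemma exists_scale_free_subgroup:
  fixes T3 :: "(nat \<Rightarrow> 'a::{field,finite}) set"
  assumes char2: "(1::'a) + 1 = 0" and q: "CARD('a) = m ^ 2"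
    and T3: "additive_subgroup 3 T3" "scale_free T3" "card T3 = m ^ 3"
    and N: "N \<noteq> 1"
  shows "\<exists>T :: (nat \<Rightarrow> 'a) set. additive_subgroup N T \<and> scale_free T \<and> card T = m ^ N"
proof (cases "even N")
  case True
  have "additive_subgroup 0 {\<lambda>i. 0 :: 'a}" "scale_free {\<lambda>i. 0 :: 'a}"
    "card {\<lambda>i. 0 :: 'a} = m ^ 0"
    by (auto simp: additive_subgroup_def scale_free_def aspace_def)
  from exists_scale_free_subgroup_add_even[OF char2 q this, of "N div 2"] True show ?thesis
    by simp
next
  case False
  with N have "N = 3 + 2 * ((N - 3) div 2)"
    by presburger
  with exists_scale_free_subgroup_add_even[OF char2 q T3, of "(N - 3) div 2"] show ?thesis
    by metis
qed

lemma real_power2_powr_half: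
  assumes "m > 0"
  shows "real (m ^ 2) powr (real k / 2) = real m ^ k"
proof -
  have "real (m ^ 2) = real m powr 2"
    using assms by (simp add: powr_numeral)
  then have "real (m ^ 2) powr (real k / 2) = real m powr (2 * (real k / 2))"
    by (simp only: powr_powr)
  also have "\<dots> = real m ^ k"
    using assms by (simp add: powr_realpow)
  finally show ?thesis .
qed

lemma scale_free_subgroup_secant_bound:
  fixes K :: "(nat \<Rightarrow> 'a::{field,finite}) set"
  assumes q: "CARD('a) = m ^ 2" and K: "additive_subgroup N K" "scale_free K" "card K = m ^ N"
  shows "K \<subseteq> aspace N \<and> real (card K) \<le> real CARD('a) powr (real N / 2) \<and>
    (\<forall>p \<in> aspace N - K. real (card {L. is_secant N K L \<and> p \<in> L}) \<ge> (real CARD('a) - 2) / 2)"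
proof (intro conjI ballI)
  have "m > 0"
    using q by (cases "m = 0") simp_all
  then show "real (card K) \<le> real CARD('a) powr (real N / 2)"
    using real_power2_powr_half[of m N] by (simp add: K(3) q)
  show "K \<subseteq> aspace N"
    using K(1) by (simp add: additive_subgroup_def)
  have "card K * card K = CARD('a) ^ N"
    by (simp add: K(3) q power2_eq_square power_mult_distrib)
  then show "(real CARD('a) - 2) / 2 \<le> real (card {L. is_secant N K L \<and> p \<in> L})"
    if "p \<in> aspace N - K" for p
    using card_secants_through_point[OF K(1,2)] that by simp
qed

theorem lemma4p2:
  fixes C :: "(nat \<Rightarrow> 'a::{field,finite}) set"
  assumes "even (card (UNIV :: 'a set))"
    and "\<exists>m::nat. card (UNIV :: 'a set) = m\<^sup>2"
    and "is_translation_cap 3 C"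
    and "real (card C) = real (card (UNIV :: 'a set)) powr (3/2)"
  shows "\<forall>N::nat. N > 2 \<longrightarrow>
    (\<exists>K :: (nat \<Rightarrow> 'a) set. K \<subseteq> aspace N \<and> real (card K) \<le> real (card (UNIV :: 'a set)) powr (real N / 2) \<and>
       (\<forall>p \<in> aspace N - K.
          real (card {L. is_secant N K L \<and> p \<in> L}) \<ge> (real (card (UNIV :: 'a set)) - 2) / 2))"
proof -
  have char2: "(1::'a) + 1 = 0"
    using assms(1) by (rule one_plus_one_eq_zero_if_even_card)
  obtain m where q: "CARD('a) = m ^ 2"
    using assms(2) by blast
  then have "m > 0"
    by (cases "m = 0") simp_all
  obtain T3 :: "(nat \<Rightarrow> 'a) set" where T3: "additive_subgroup 3 T3" "scale_free T3" "card T3 = card C"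
    using assms(3) by (rule translation_cap_scale_free)
  have "real (card T3) = real (m ^ 3)"
    using assms(4) real_power2_powr_half[OF \<open>m > 0\<close>, of 3] by (simp add: T3(3) q)
  then have "card T3 = m ^ 3"
    by (simp only: of_nat_eq_iff)
  show ?thesis
  proof (intro allI impI)
    fix N :: nat
    assume "N > 2"
    then obtain K :: "(nat \<Rightarrow> 'a) set"
      where K: "additive_subgroup N K" "scale_free K" "card K = m ^ N"
      using exists_scale_free_subgroup[OF char2 q T3(1,2) \<open>card T3 = m ^ 3\<close>, of N] by auto
    show "\<exists>K :: (nat \<Rightarrow> 'a) set. K \<subseteq> aspace N \<and> real (card K) \<le> real CARD('a) powr (real N / 2) \<and>
        (\<forall>p \<in> aspace N - K. real (card {L. is_secant N K L \<and> p \<in> L}) \<ge> (real CARD('a) - 2) / 2)"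
      using scale_free_subgroup_secant_bound[OF q K] by blast
  qed
qed

end
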